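(* Let $\alpha$ be a probability measure on $\{0,1,2,\dots\}$ with mean $m(\alpha)<1$. Then $TGWT(\alpha)$ is the typical re-rooting of the ordered Galton-Watson tree $GW(\alpha)$ (rooted at its ancestor vertex).
   Context: A Family Tree is a directed tree in which every vertex has out-degree at most one (edges point from child to parent). $GW(\alpha)$ is the ordered (plane) Galton-Watson tree in which every vertex independently has an $\alpha$-distributed number of children, rooted at the vertex without parent. Typical re-rooting: for a random rooted Family Tree $[\mathbf{T},\mathbf{o}]$ with $\mathbb{E}[\#V(\mathbf{T})]<\infty$, it is the probability measure $\mathcal{P}'[A]=\mathbb{E}\big[\sum_{u\in V(\mathbf{T})}\mathbf{1}_A([\mathbf{T},u])\big]/\mathbb{E}[\#V(\mathbf{T})]$ on rooted (ordered) trees. $TGWT(\alpha)$: with $\hat\alpha(k)=k\alpha(k)/m(\alpha)$, it is the random rooted ordered Family Tree in which (i) the root has a parent with probability $m(\alpha)$, and independently each ancestor in turn has a parent with probability $m(\alpha)$; (ii) each ancestor of the root independently receives $Z-1$ additional children with $Z\sim\hat\alpha$, and the children of each ancestor are ordered uniformly at random; (iii) independent $GW(\alpha)$ trees are attached as descendant trees to the root and to each additional child. *)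

theory Defs
  imports "HOL-Probability.Probability"
begin

text \<open>Finite ordered (plane) trees. A vertex is addressed by the list of child
indices on the path from the top vertex (the vertex without parent).\<close>

datatype ptree = Node "ptree list"

primrec children :: "ptree \<Rightarrow> ptree list" where
  "children (Node cs) = cs"

primrec valid_addr :: "ptree \<Rightarrow> nat list \<Rightarrow> bool" where
  "valid_addr t [] = True"
| "valid_addr t (i # p) = (i < length (children t) \<and> valid_addr (children t ! i) p)"

definition vertices :: "ptree \<Rightarrow> nat list set" where
  "vertices t = {p. valid_addr t p}"

definition offspring_mean :: "nat pmf \<Rightarrow> real" where
  "offspring_mean \<alpha> = (\<Sum>k. real k * pmf \<alpha> k)"

text \<open>Probability that GW(alpha) equals the finite plane tree t:
  the product over all vertices of alpha(number of children).\<close>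
fun gw :: "nat pmf \<Rightarrow> ptree \<Rightarrow> real" where
  "gw \<alpha> (Node cs) = pmf \<alpha> (length cs) * prod_list (map (gw \<alpha>) cs)"

definition gw_expected_size :: "nat pmf \<Rightarrow> real" where
  "gw_expected_size \<alpha> = (\<Sum>\<^sub>\<infinity> t. gw \<alpha> t * real (card (vertices t)))"

text \<open>Typical re-rooting of GW(alpha): a measure on rooted ordered trees,
  represented as pairs (top tree, address of the root vertex).\<close>
definition typical_rerooting_gw :: "nat pmf \<Rightarrow> (ptree \<times> nat list) set \<Rightarrow> real" where
  "typical_rerooting_gw \<alpha> A =
     (\<Sum>\<^sub>\<infinity> t. gw \<alpha> t * real (card {u \<in> vertices t. (t, u) \<in> A})) / gw_expected_size \<alpha>"

text \<open>Probability that TGWT(alpha) equals the rooted ordered tree (t,p):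
  p lists, from the top ancestor downwards, the position of the path child
  among the children of each ancestor. Each ancestor exists with probability m
  (the top one has no parent, probability 1-m), has Z children with
  Z ~ hat alpha (probability Z alpha(Z)/m), the path child sits at a uniformly
  random position (probability 1/Z), the other children carry independent
  GW(alpha) trees, and the root carries a GW(alpha) tree.\<close>
primrec tgwt_prob :: "nat pmf \<Rightarrow> ptree \<Rightarrow> nat list \<Rightarrow> real" where
  "tgwt_prob \<alpha> t [] = (1 - offspring_mean \<alpha>) * gw \<alpha> t"
| "tgwt_prob \<alpha> t (i # p) =
     (let cs = children t; z = length cs; m = offspring_mean \<alpha> in
      if i < z then
        m * ((real z * pmf \<alpha> z / m) * (1 / real z)
             * (\<Prod>j\<in>{..<z} - {i}. gw \<alpha> (cs ! j)))
          * tgwt_prob \<alpha> (cs ! i) p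
      else 0)"

definition tgwt :: "nat pmf \<Rightarrow> (ptree \<times> nat list) set \<Rightarrow> real" where
  "tgwt \<alpha> A = (\<Sum>\<^sub>\<infinity> (t, p) \<in> A. tgwt_prob \<alpha> t p)"

end

theory Submission
  imports Defs
begin

text \<open>Along the ancestral line of TGWT(alpha), an ancestor with z children contributes
  the factor m * (z alpha(z) / m) * (1 / z) = alpha(z) times the GW weights of the other
  children, i.e. exactly the GW(alpha) weight of that generation. Hence the rooted tree (t, u)
  has TGWT weight (1 - m) gw(t) for every vertex u of t, which is the typical re-rooting
  once the expected size of GW(alpha) is known to be 1 / (1 - m).

  For that, the total mass S and the size-weighted mass E of GW(alpha) on finite trees satisfy
  S = f(S) and E = sum_z alpha(z) (S^z + z E S^(z-1)), where f is the generating function of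
  alpha. Truncating at finite height gives S <= 1 and E <= 1 / (1 - m). As f lies above its
  tangent at 1, of slope m < 1, its only fixed point in [0, 1] is 1; so S = 1, and the finite
  E solves E = 1 + m E.\<close>

section \<open>Sums over the counting measure\<close>

abbreviation nn_sum :: "('a \<Rightarrow> ennreal) \<Rightarrow> ennreal" where
  "nn_sum h \<equiv> \<integral>\<^sup>+x. h x \<partial>count_space UNIV"

lemma nn_sum_list_cases: "nn_sum h = h [] + nn_sum (\<lambda>x. nn_sum (\<lambda>xs. h (x # xs)))"
proof -
  have "nn_sum h = (\<integral>\<^sup>+cs \<in> {[]} \<union> - {[]}. h cs \<partial>count_space UNIV)"
    by simp
  also have "\<dots> = h [] + (\<integral>\<^sup>+cs. h cs \<partial>count_space (- {[]}))"
    by (subst nn_integral_disjoint_pair_countspace)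
      (simp_all add: nn_integral_indicator_singleton nn_integral_count_space_indicator)
  also have "(\<integral>\<^sup>+cs. h cs \<partial>count_space (- {[]})) = nn_sum (\<lambda>(x, xs). h (x # xs))"
  proof -
    have "bij_betw (\<lambda>(x, xs). x # xs) UNIV (- {[]})"
      by (auto simp: bij_betw_def inj_on_def neq_Nil_conv image_def)
    from nn_integral_bij_count_space[OF this, of h] show ?thesis
      by (simp add: case_prod_unfold)
  qed
  also have "\<dots> = nn_sum (\<lambda>x. nn_sum (\<lambda>xs. h (x # xs)))"
    using nn_integral_fst_count_space[of "\<lambda>(x, xs). h (x # xs)"] by simp
  finally show ?thesis .
qed

lemma nn_sum_prod_list_length:
  "nn_sum (\<lambda>cs. if length cs = z then prod_list (map f cs) else 0) = nn_sum f ^ z"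
proof (induction z)
  case 0
  show ?case by (subst nn_sum_list_cases) simp
next
  case (Suc z)
  have "nn_sum (\<lambda>cs. if length cs = Suc z then prod_list (map f cs) else 0)
      = nn_sum (\<lambda>x. nn_sum (\<lambda>xs. f x * (if length xs = z then prod_list (map f xs) else 0)))"
    by (subst nn_sum_list_cases) (simp add: if_distrib cong: if_cong)
  also have "\<dots> = nn_sum f * nn_sum f ^ z"
    by (simp add: nn_integral_cmult nn_integral_multc Suc)
  finally show ?case by simp
qed

lemma nn_sum_prod_list_sum_list_length:
  "nn_sum (\<lambda>cs. if length cs = z then prod_list (map f cs) * sum_list (map g cs) else 0)
     = of_nat z * nn_sum (\<lambda>x. f x * g x) * nn_sum f ^ (z - 1)"
proof (induction z)
  case 0
  show ?case by (subst nn_sum_list_cases) simp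
next
  case (Suc z)
  let ?P = "\<lambda>xs. if length xs = z then prod_list (map f xs) else 0"
  let ?Q = "\<lambda>xs. if length xs = z then prod_list (map f xs) * sum_list (map g xs) else 0"
  have "nn_sum (\<lambda>cs. if length cs = Suc z then prod_list (map f cs) * sum_list (map g cs) else 0)
      = nn_sum (\<lambda>x. nn_sum (\<lambda>xs. f x * g x * ?P xs) + nn_sum (\<lambda>xs. f x * ?Q xs))"
    by (subst nn_sum_list_cases)
      (auto intro!: nn_integral_cong simp: nn_integral_add[symmetric] algebra_simps)
  also have "\<dots> = nn_sum (\<lambda>x. f x * g x) * nn_sum f ^ z
                  + nn_sum f * (of_nat z * nn_sum (\<lambda>x. f x * g x) * nn_sum f ^ (z - 1))"
    by (simp add: nn_integral_add nn_integral_cmult nn_integral_multc nn_sum_prod_list_length Suc)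
  also have "\<dots> = of_nat (Suc z) * nn_sum (\<lambda>x. f x * g x) * nn_sum f ^ (Suc z - 1)"
    by (cases z) (auto simp: algebra_simps)
  finally show ?case .
qed

lemma nn_sum_by_length: "nn_sum h = (\<Sum>z. nn_sum (\<lambda>cs. if length cs = z then h cs else 0))"
proof -
  have "nn_sum h = nn_sum (\<lambda>cs. \<Sum>z. if length cs = z then h cs else 0)"
  proof (intro nn_integral_cong)
    fix cs :: "'a list"
    show "h cs = (\<Sum>z. if length cs = z then h cs else 0)"
      by (subst suminf_finite[of "{length cs}"]) auto
  qed
  also have "\<dots> = (\<Sum>z. nn_sum (\<lambda>cs. if length cs = z then h cs else 0))"
    by (rule nn_integral_suminf) auto
  finally show ?thesis .
qed

lemma nn_sum_SUP_incseq:
  assumes "incseq A" and "\<And>x. \<exists>n. x \<in> A n"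
  shows "nn_sum g = (SUP n. nn_sum (\<lambda>x. indicator (A n) x * g x))"
proof -
  have "(SUP n. indicator (A n) x * g x) = g x" for x
  proof (rule antisym)
    show "(SUP n. indicator (A n) x * g x) \<le> g x"
      by (rule SUP_least) (simp add: indicator_def)
    obtain n where "x \<in> A n" using assms(2) by blast
    then show "g x \<le> (SUP n. indicator (A n) x * g x)"
      by (intro SUP_upper2[of n]) auto
  qed
  moreover have "incseq (\<lambda>n x. indicator (A n) x * g x)"
    using assms(1) by (auto simp: incseq_def le_fun_def indicator_def)
  ultimately show ?thesis
    using nn_integral_monotone_convergence_SUP[of "\<lambda>n x. indicator (A n) x * g x" "count_space UNIV"]
    by simp
qed

lemma infsum_conv_nn_integral:
  fixes f :: "'a \<Rightarrow> real"
  assumes "\<And>x. x \<in> A \<Longrightarrow> 0 \<le> f x" and "(\<integral>\<^sup>+x. f x \<partial>count_space A) \<noteq> \<infinity>"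
  shows "infsum f A = enn2real (\<integral>\<^sup>+x. f x \<partial>count_space A)"
proof -
  have "(\<integral>\<^sup>+x. norm (f x) \<partial>count_space A) = (\<integral>\<^sup>+x. f x \<partial>count_space A)"
    using assms(1) by (intro nn_integral_cong) auto
  then have "Infinite_Set_Sum.abs_summable_on f A"
    using assms(2) unfolding abs_summable_on_def
    by (intro integrableI_bounded) (auto simp: top.not_eq_extremum)
  then have "infsum f A = infsetsum f A"
    by (simp add: infsetsum_infsum)
  then show ?thesis
    using assms by (simp add: infsetsum_conv_nn_integral)
qed

section \<open>Plane trees and the TGWT weight\<close>

lemma vertices_Node: "vertices (Node cs) = insert [] (\<Union>i<length cs. (#) i ` vertices (cs ! i))"
  unfolding vertices_def
proof (intro set_eqI)
  fix p
  show "p \<in> {p. valid_addr (Node cs) p}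
      \<longleftrightarrow> p \<in> insert [] (\<Union>i<length cs. (#) i ` {p. valid_addr (cs ! i) p})"
    by (cases p) auto
qed

lemma finite_vertices: "finite (vertices t)"
  by (induction t) (auto simp: vertices_Node)

lemma card_vertices_Node: "card (vertices (Node cs)) = 1 + sum_list (map (\<lambda>c. card (vertices c)) cs)"
proof -
  have "card (\<Union>i<length cs. (#) i ` vertices (cs ! i)) = (\<Sum>i<length cs. card ((#) i ` vertices (cs ! i)))"
    by (rule card_UN_disjoint) (auto simp: finite_vertices)
  also have "\<dots> = (\<Sum>i<length cs. card (vertices (cs ! i)))"
    by (intro sum.cong refl card_image) auto
  also have "\<dots> = sum_list (map (\<lambda>c. card (vertices c)) cs)"
    by (simp add: sum_list_sum_nth atLeast0LessThan)
  finally show ?thesis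
    unfolding vertices_Node by (subst card_insert_disjoint) (auto simp: finite_vertices)
qed

lemma gw_nonneg: "0 \<le> gw \<alpha> t"
  by (induction t) (auto intro!: mult_nonneg_nonneg prod_list_nonneg)

lemma ennreal_prod_list:
  "(\<And>x. 0 \<le> f x) \<Longrightarrow> ennreal (prod_list (map f xs)) = prod_list (map (\<lambda>x. ennreal (f x)) xs)"
  by (induction xs) (simp_all add: ennreal_mult')

lemma ennreal_gw_Node:
  "ennreal (gw \<alpha> (Node cs)) = ennreal (pmf \<alpha> (length cs)) * prod_list (map (\<lambda>c. ennreal (gw \<alpha> c)) cs)"
  by (simp add: ennreal_mult' ennreal_prod_list gw_nonneg)

lemma nn_sum_ptree: "nn_sum h = nn_sum (\<lambda>cs. h (Node cs))"
proof -
  have "bij_betw Node UNIV UNIV"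
    by (auto simp: bij_betw_def inj_on_def image_def intro: ptree.exhaust)
  from nn_integral_bij_count_space[OF this, of h] show ?thesis
    by simp
qed

lemma nn_integral_rooted_trees:
  "(\<integral>\<^sup>+x. (if valid_addr (fst x) (snd x) then c (fst x) else 0) \<partial>count_space A)
     = nn_sum (\<lambda>t. c t * of_nat (card {u \<in> vertices t. (t, u) \<in> A}))"
proof -
  have inner: "nn_sum (\<lambda>p. (if valid_addr t p then c t else 0) * indicator A (t, p))
      = c t * of_nat (card {u \<in> vertices t. (t, u) \<in> A})" for t
  proof -
    have "nn_sum (\<lambda>p. (if valid_addr t p then c t else 0) * indicator A (t, p))
        = nn_sum (\<lambda>p. c t * indicator {u \<in> vertices t. (t, u) \<in> A} p)"
      by (intro nn_integral_cong) (auto simp: vertices_def indicator_def)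
    then show ?thesis
      by (simp add: nn_integral_cmult finite_vertices)
  qed
  have "(\<integral>\<^sup>+x. (if valid_addr (fst x) (snd x) then c (fst x) else 0) \<partial>count_space A)
      = nn_sum (\<lambda>(t, p). (if valid_addr t p then c t else 0) * indicator A (t, p))"
    by (simp add: nn_integral_count_space_indicator case_prod_beta')
  also have "\<dots> = nn_sum (\<lambda>t. nn_sum (\<lambda>p. (if valid_addr t p then c t else 0) * indicator A (t, p)))"
    using nn_integral_fst_count_space[of "\<lambda>(t, p). (if valid_addr t p then c t else 0) * indicator A (t, p)"]
    by simp
  finally show ?thesis
    by (simp only: inner)
qed

lemma pmf_eq_0_if_offspring_mean_eq_0:
  assumes "summable (\<lambda>k. real k * pmf \<alpha> k)" and "offspring_mean \<alpha> = 0" and "0 < z"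
  shows "pmf \<alpha> z = 0"
proof -
  have "real z * pmf \<alpha> z = 0"
    using assms(1,2) suminf_eq_zero_iff[OF assms(1)] unfolding offspring_mean_def by simp
  then show ?thesis
    using assms(3) by simp
qed

lemma tgwt_prob_eq:
  assumes "summable (\<lambda>k. real k * pmf \<alpha> k)"
  shows "tgwt_prob \<alpha> t p = (if valid_addr t p then (1 - offspring_mean \<alpha>) * gw \<alpha> t else 0)"
proof (induction p arbitrary: t)
  case Nil
  then show ?case by simp
next
  case (Cons i p)
  obtain cs where t: "t = Node cs"
    by (cases t)
  define m where "m = offspring_mean \<alpha>"
  define z where "z = length cs"
  define R where "R = (\<Prod>j\<in>{..<z} - {i}. gw \<alpha> (cs ! j))"
  show ?case
  proof (cases "i < z")
    case False
    then show ?thesis by (simp add: t z_def)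
  next
    case True
    have gw_t: "gw \<alpha> t = pmf \<alpha> z * (gw \<alpha> (cs ! i) * R)"
      using True by (simp add: t z_def R_def prod.list_conv_set_nth atLeast0LessThan prod.remove)
    have valid: "valid_addr t (i # p) = valid_addr (cs ! i) p"
      using True by (simp add: t z_def)
    \<comment> \<open>For \<open>m = 0\<close> the quotient is the junk value \<open>x / 0 = 0\<close>; then \<open>\<alpha>(z) = 0\<close> too.\<close>
    have step: "m * ((real z * pmf \<alpha> z / m) * (1 / real z) * R) = pmf \<alpha> z * R"
    proof (cases "m = 0")
      case True
      then show ?thesis
        using pmf_eq_0_if_offspring_mean_eq_0[OF assms] \<open>i < z\<close> by (simp add: m_def)
    next
      case False
      then show ?thesis
        using \<open>i < z\<close> by (simp add: field_simps)
    qed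
    have "tgwt_prob \<alpha> t (i # p) = m * ((real z * pmf \<alpha> z / m) * (1 / real z) * R) * tgwt_prob \<alpha> (cs ! i) p"
      using True by (simp add: t Let_def m_def z_def R_def)
    then show ?thesis
      unfolding step valid gw_t Cons.IH by (simp add: m_def)
  qed
qed

section \<open>Generating equations of GW(alpha)\<close>

definition gw_mass :: "nat pmf \<Rightarrow> ptree set \<Rightarrow> ennreal" where
  "gw_mass \<alpha> B = nn_sum (\<lambda>t. indicator B t * ennreal (gw \<alpha> t))"

definition gw_size_mass :: "nat pmf \<Rightarrow> ptree set \<Rightarrow> ennreal" where
  "gw_size_mass \<alpha> B = nn_sum (\<lambda>t. indicator B t * ennreal (gw \<alpha> t) * of_nat (card (vertices t)))"

lemma prod_list_indicator_mult:
  fixes f :: "'a \<Rightarrow> 'b::comm_semiring_1"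
  shows "prod_list (map (\<lambda>x. indicator B x * f x) xs) = indicator {xs. set xs \<subseteq> B} xs * prod_list (map f xs)"
  by (induction xs) (auto simp: indicator_def)

lemma indicator_children_in_gw_Node:
  "indicator {t. set (children t) \<subseteq> B} (Node cs) * ennreal (gw \<alpha> (Node cs))
     = ennreal (pmf \<alpha> (length cs)) * prod_list (map (\<lambda>c. indicator B c * ennreal (gw \<alpha> c)) cs)"
  by (simp only: ennreal_gw_Node prod_list_indicator_mult) (simp add: indicator_def)

lemma gw_mass_children_in:
  "gw_mass \<alpha> {t. set (children t) \<subseteq> B} = (\<Sum>z. ennreal (pmf \<alpha> z) * gw_mass \<alpha> B ^ z)"
proof -
  define f where "f c = indicator B c * ennreal (gw \<alpha> c)" for c
  have "gw_mass \<alpha> {t. set (children t) \<subseteq> B}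
      = nn_sum (\<lambda>cs. ennreal (pmf \<alpha> (length cs)) * prod_list (map f cs))"
    unfolding gw_mass_def f_def by (subst nn_sum_ptree) (simp only: indicator_children_in_gw_Node)
  also have "\<dots> = (\<Sum>z. nn_sum (\<lambda>cs.
      ennreal (pmf \<alpha> z) * (if length cs = z then prod_list (map f cs) else 0)))"
    by (subst nn_sum_by_length) (auto intro!: suminf_cong nn_integral_cong)
  also have "\<dots> = (\<Sum>z. ennreal (pmf \<alpha> z) * gw_mass \<alpha> B ^ z)"
    by (simp add: nn_integral_cmult nn_sum_prod_list_length gw_mass_def f_def)
  finally show ?thesis .
qed

lemma gw_size_mass_children_in:
  "gw_size_mass \<alpha> {t. set (children t) \<subseteq> B}
     = (\<Sum>z. ennreal (pmf \<alpha> z)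
          * (gw_mass \<alpha> B ^ z + of_nat z * gw_size_mass \<alpha> B * gw_mass \<alpha> B ^ (z - 1)))"
proof -
  define f where "f c = indicator B c * ennreal (gw \<alpha> c)" for c
  define g where "g c = (of_nat (card (vertices c)) :: ennreal)" for c
  have "gw_size_mass \<alpha> {t. set (children t) \<subseteq> B}
      = nn_sum (\<lambda>cs. ennreal (pmf \<alpha> (length cs))
          * (prod_list (map f cs) + prod_list (map f cs) * sum_list (map g cs)))"
  proof (unfold gw_size_mass_def, subst nn_sum_ptree, intro nn_integral_cong)
    fix cs
    show "indicator {t. set (children t) \<subseteq> B} (Node cs) * ennreal (gw \<alpha> (Node cs))
          * of_nat (card (vertices (Node cs)))
        = ennreal (pmf \<alpha> (length cs)) * (prod_list (map f cs) + prod_list (map f cs) * sum_list (map g cs))"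
      unfolding indicator_children_in_gw_Node card_vertices_Node f_def g_def
      by (simp add: sum_list_of_nat[symmetric] o_def algebra_simps)
  qed
  also have "\<dots> = (\<Sum>z. nn_sum (\<lambda>cs. ennreal (pmf \<alpha> z)
      * ((if length cs = z then prod_list (map f cs) else 0)
         + (if length cs = z then prod_list (map f cs) * sum_list (map g cs) else 0))))"
    by (subst nn_sum_by_length) (auto intro!: suminf_cong nn_integral_cong)
  also have "\<dots> = (\<Sum>z. ennreal (pmf \<alpha> z)
      * (gw_mass \<alpha> B ^ z + of_nat z * gw_size_mass \<alpha> B * gw_mass \<alpha> B ^ (z - 1)))"
    by (simp add: nn_integral_cmult nn_integral_add nn_sum_prod_list_length nn_sum_prod_list_sum_list_length
        gw_mass_def gw_size_mass_def f_def g_def)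
  finally show ?thesis .
qed

primrec height_below :: "nat \<Rightarrow> ptree set" where
  "height_below 0 = {}"
| "height_below (Suc n) = {t. set (children t) \<subseteq> height_below n}"

lemma incseq_height_below: "incseq height_below"
proof (rule incseq_SucI)
  show "height_below n \<subseteq> height_below (Suc n)" for n
    by (induction n) auto
qed

lemma ex_height_below: "\<exists>n. t \<in> height_below n"
proof (induction t)
  case (Node cs)
  then obtain h where h: "\<And>c. c \<in> set cs \<Longrightarrow> c \<in> height_below (h c)"
    by metis
  have "c \<in> height_below (Max (h ` set cs))" if "c \<in> set cs" for c
  proof -
    have "h c \<le> Max (h ` set cs)"
      using that by (intro Max_ge) auto
    then show ?thesis
      using h[OF that] incseq_height_below by (auto simp: incseq_def)
  qed
  then have "Node cs \<in> height_below (Suc (Max (h ` set cs)))"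
    by auto
  then show ?case ..
qed

lemma gw_mass_UNIV_eq_SUP: "gw_mass \<alpha> UNIV = (SUP n. gw_mass \<alpha> (height_below n))"
  unfolding gw_mass_def by (subst nn_sum_SUP_incseq[OF incseq_height_below ex_height_below]) simp

lemma gw_size_mass_UNIV_eq_SUP: "gw_size_mass \<alpha> UNIV = (SUP n. gw_size_mass \<alpha> (height_below n))"
  unfolding gw_size_mass_def
  by (subst nn_sum_SUP_incseq[OF incseq_height_below ex_height_below]) (simp add: mult.assoc)

section \<open>Subcritical offspring distributions\<close>

lemma suminf_ennreal_pmf_nat: "(\<Sum>z. ennreal (pmf (\<alpha> :: nat pmf) z)) = 1"
  using nn_integral_pmf_eq_1[of \<alpha>] by (simp add: nn_integral_count_space_nat)

lemma sums_pmf_nat: "pmf (\<alpha> :: nat pmf) sums 1"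
  using summable_sums[OF summableI, of "\<lambda>z. ennreal (pmf \<alpha> z)"]
  by (metis suminf_ennreal_pmf_nat ennreal_1 sums_ennreal pmf_nonneg zero_le_one)

locale subcritical =
  fixes \<alpha> :: "nat pmf"
  assumes summable_mean: "summable (\<lambda>k. real k * pmf \<alpha> k)"
    and mean_less_1: "offspring_mean \<alpha> < 1"
begin

abbreviation "m \<equiv> offspring_mean \<alpha>"

lemma mean_nonneg: "0 \<le> m"
  unfolding offspring_mean_def by (rule suminf_nonneg[OF summable_mean]) simp

lemma suminf_pmf_affine: "(\<Sum>z. ennreal (pmf \<alpha> z) * (1 + of_nat z * e)) = 1 + e * ennreal m"
proof -
  have "(\<Sum>z. ennreal (real z * pmf \<alpha> z)) = ennreal m"
    unfolding offspring_mean_def by (rule suminf_ennreal2) (auto simp: summable_mean)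
  then have "(\<Sum>z. ennreal (pmf \<alpha> z) * of_nat z) = ennreal m"
    by (simp add: ennreal_mult' ennreal_of_nat_eq_real_of_nat mult.commute)
  then show ?thesis
    by (simp add: suminf_add[symmetric] suminf_ennreal_pmf_nat algebra_simps)
qed

lemma pgf_fixed_point_eq_1:
  assumes "0 \<le> s" "s \<le> 1" and fixed: "(\<lambda>z. pmf \<alpha> z * s ^ z) sums s"
  shows "s = 1"
proof -
  have linear: "(\<lambda>z. pmf \<alpha> z + (s - 1) * (real z * pmf \<alpha> z)) sums (1 + (s - 1) * m)"
    unfolding offspring_mean_def
    by (intro sums_add sums_mult sums_pmf_nat summable_sums summable_mean)
  have tangent_below: "pmf \<alpha> z + (s - 1) * (real z * pmf \<alpha> z) \<le> pmf \<alpha> z * s ^ z" for z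
  proof -
    have "1 + real z * (s - 1) \<le> (1 + (s - 1)) ^ z"
      using assms(1) by (intro Bernoulli_inequality) auto
    then have "pmf \<alpha> z * (1 + real z * (s - 1)) \<le> pmf \<alpha> z * s ^ z"
      by (intro mult_left_mono) auto
    then show ?thesis
      by (simp add: algebra_simps)
  qed
  have "1 + (s - 1) * m \<le> s"
    by (rule sums_le[OF tangent_below linear fixed])
  then have "(1 - m) * (1 - s) \<le> 0"
    by (simp add: algebra_simps)
  then show ?thesis
    using assms(2) mean_less_1 by (simp add: mult_le_0_iff)
qed

lemma ennreal_affine_fixed_point_iff:
  assumes "0 \<le> c"
  shows "1 + ennreal c * ennreal m = ennreal c \<longleftrightarrow> c = 1 / (1 - m)"
proof -
  have "1 + ennreal c * ennreal m = ennreal (1 + c * m)"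
    using assms mean_nonneg by (simp add: ennreal_mult ennreal_plus)
  then have "1 + ennreal c * ennreal m = ennreal c \<longleftrightarrow> 1 + c * m = c"
    using assms mean_nonneg by (simp del: ennreal_plus)
  also have "\<dots> \<longleftrightarrow> c = 1 / (1 - m)"
    using mean_less_1 by (auto simp: field_simps)
  finally show ?thesis .
qed

lemma gw_masses_height_below_le:
  "gw_mass \<alpha> (height_below n) \<le> 1 \<and> gw_size_mass \<alpha> (height_below n) \<le> ennreal (1 / (1 - m))"
proof (induction n)
  case 0
  show ?case by (simp add: gw_mass_def gw_size_mass_def)
next
  case (Suc n)
  define M where "M = gw_mass \<alpha> (height_below n)"
  define E where "E = gw_size_mass \<alpha> (height_below n)"
  have "M \<le> 1" "E \<le> ennreal (1 / (1 - m))"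
    using Suc M_def E_def by auto
  then have M_pow_le: "M ^ k \<le> 1" for k
    by (simp add: power_le_one)
  have "gw_mass \<alpha> (height_below (Suc n)) = (\<Sum>z. ennreal (pmf \<alpha> z) * M ^ z)"
    by (simp add: gw_mass_children_in M_def)
  also have "\<dots> \<le> (\<Sum>z. ennreal (pmf \<alpha> z))"
    using mult_left_mono[OF M_pow_le] by (intro suminf_le summableI) (metis mult.right_neutral zero_le)
  finally have mass_le: "gw_mass \<alpha> (height_below (Suc n)) \<le> 1"
    by (simp add: suminf_ennreal_pmf_nat)
  have "gw_size_mass \<alpha> (height_below (Suc n))
      = (\<Sum>z. ennreal (pmf \<alpha> z) * (M ^ z + of_nat z * E * M ^ (z - 1)))"
    by (simp add: gw_size_mass_children_in M_def E_def)
  also have "\<dots> \<le> (\<Sum>z. ennreal (pmf \<alpha> z) * (1 + of_nat z * ennreal (1 / (1 - m))))"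
  proof (intro suminf_le summableI mult_left_mono)
    fix z
    have "M ^ z + of_nat z * E * M ^ (z - 1) \<le> 1 + of_nat z * ennreal (1 / (1 - m)) * 1"
      using M_pow_le \<open>E \<le> _\<close> by (intro add_mono mult_mono) auto
    then show "M ^ z + of_nat z * E * M ^ (z - 1) \<le> 1 + of_nat z * ennreal (1 / (1 - m))"
      by simp
  qed simp
  also have "\<dots> = ennreal (1 / (1 - m))"
    using mean_less_1 by (simp add: suminf_pmf_affine ennreal_affine_fixed_point_iff)
  finally show ?case
    using mass_le by simp
qed

lemma gw_mass_UNIV: "gw_mass \<alpha> UNIV = 1"
proof -
  have "gw_mass \<alpha> UNIV \<le> 1"
    unfolding gw_mass_UNIV_eq_SUP using gw_masses_height_below_le by (blast intro: SUP_least)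
  then obtain s where s: "gw_mass \<alpha> UNIV = ennreal s" "0 \<le> s" "s \<le> 1"
    by (cases "gw_mass \<alpha> UNIV" rule: ennreal_cases) (auto simp: ennreal_le_1 top_unique)
  have "(\<lambda>z. ennreal (pmf \<alpha> z * s ^ z)) sums ennreal s"
    using gw_mass_children_in[of \<alpha> UNIV] s summable_sums[OF summableI, of "\<lambda>z. ennreal (pmf \<alpha> z * s ^ z)"]
    by (simp add: ennreal_mult' ennreal_power)
  then have "(\<lambda>z. pmf \<alpha> z * s ^ z) sums s"
    using s(2) by simp
  with s(2,3) have "s = 1"
    by (rule pgf_fixed_point_eq_1)
  then show ?thesis
    using s(1) by simp
qed

lemma gw_size_mass_UNIV: "gw_size_mass \<alpha> UNIV = ennreal (1 / (1 - m))"
proof -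
  have "gw_size_mass \<alpha> UNIV \<le> ennreal (1 / (1 - m))"
    unfolding gw_size_mass_UNIV_eq_SUP using gw_masses_height_below_le by (blast intro: SUP_least)
  then obtain e where e: "gw_size_mass \<alpha> UNIV = ennreal e" "0 \<le> e"
    by (cases "gw_size_mass \<alpha> UNIV" rule: ennreal_cases) (auto simp: top_unique)
  have "1 + ennreal e * ennreal m = ennreal e"
    using gw_size_mass_children_in[of \<alpha> UNIV] by (simp add: gw_mass_UNIV e(1) suminf_pmf_affine)
  then show ?thesis
    using e ennreal_affine_fixed_point_iff by simp
qed

lemma gw_expected_size_eq: "gw_expected_size \<alpha> = 1 / (1 - m)"
proof -
  have size_sum: "(\<integral>\<^sup>+t. gw \<alpha> t * real (card (vertices t)) \<partial>count_space UNIV) = ennreal (1 / (1 - m))"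
    unfolding gw_size_mass_UNIV[symmetric] gw_size_mass_def
    by (intro nn_integral_cong) (simp add: ennreal_mult' gw_nonneg ennreal_of_nat_eq_real_of_nat)
  have "gw_expected_size \<alpha> = enn2real (\<integral>\<^sup>+t. gw \<alpha> t * real (card (vertices t)) \<partial>count_space UNIV)"
    unfolding gw_expected_size_def by (rule infsum_conv_nn_integral) (simp_all add: gw_nonneg size_sum)
  then show ?thesis
    using size_sum mean_less_1 by simp
qed

lemma tgwt_eq_expected_count:
  "tgwt \<alpha> A = (1 - m) * (\<Sum>\<^sub>\<infinity>t. gw \<alpha> t * real (card {u \<in> vertices t. (t, u) \<in> A}))"
proof -
  define K where "K t = card {u \<in> vertices t. (t, u) \<in> A}" for t
  define f where "f x = (if valid_addr (fst x) (snd x) then (1 - m) * gw \<alpha> (fst x) else 0)" for x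
  define X where "X = (\<integral>\<^sup>+t. gw \<alpha> t * real (K t) \<partial>count_space UNIV)"
  have f_nonneg: "0 \<le> f x" for x
    using mean_less_1 gw_nonneg by (simp add: f_def)
  have "X \<le> gw_size_mass \<alpha> UNIV"
    unfolding X_def gw_size_mass_def
    by (intro nn_integral_mono)
      (simp add: K_def ennreal_mult' gw_nonneg ennreal_of_nat_eq_real_of_nat mult_left_mono card_mono finite_vertices)
  then have X_finite: "X \<noteq> \<top>"
    by (auto simp: gw_size_mass_UNIV top_unique)
  have "(\<integral>\<^sup>+x. f x \<partial>count_space A) = nn_sum (\<lambda>t. ennreal ((1 - m) * gw \<alpha> t) * of_nat (K t))"
    unfolding K_def f_def nn_integral_rooted_trees[symmetric] by (intro nn_integral_cong) simp
  also have "\<dots> = ennreal (1 - m) * X"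
    unfolding X_def using mean_less_1 gw_nonneg
    by (simp add: nn_integral_cmult[symmetric] ennreal_mult' ennreal_of_nat_eq_real_of_nat mult.assoc)
  finally have pairs: "(\<integral>\<^sup>+x. f x \<partial>count_space A) = ennreal (1 - m) * X" .
  have "tgwt \<alpha> A = infsum f A"
    unfolding tgwt_def f_def using summable_mean by (intro infsum_cong) (auto simp: tgwt_prob_eq)
  also have "\<dots> = (1 - m) * enn2real X"
    using f_nonneg X_finite mean_less_1
    by (subst infsum_conv_nn_integral) (auto simp: pairs ennreal_mult_eq_top_iff enn2real_mult)
  also have "enn2real X = (\<Sum>\<^sub>\<infinity>t. gw \<alpha> t * real (K t))"
    unfolding X_def using X_finite gw_nonneg
    by (subst infsum_conv_nn_integral) (auto simp: X_def)
  finally show ?thesis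
    by (simp add: K_def)
qed

end

theorem proposition4p17:
  fixes \<alpha> :: "nat pmf"
  assumes "summable (\<lambda>k. real k * pmf \<alpha> k)"
    and "offspring_mean \<alpha> < 1"
  shows "\<forall>A. tgwt \<alpha> A = typical_rerooting_gw \<alpha> A"
proof
  fix A
  interpret subcritical \<alpha>
    using assms by unfold_locales
  show "tgwt \<alpha> A = typical_rerooting_gw \<alpha> A"
    unfolding tgwt_eq_expected_count typical_rerooting_gw_def gw_expected_size_eq
    using mean_less_1 by simp
qed

end
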